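(* Let $P(x)=\sum_{j=0}^n a_jx^j$ be a real polynomial of degree $n$, and let $m\in\{0,1,\dots,n\}$ be such that $a_j\ge0$ for all $m\le j\le n$. For $r>0$ define \[ b(r):=\sum_{j=m}^n a_jr^{j-m},\qquad c(r):=\max_{1\le i\le m}\left(\frac{|a_{m-i}|}{b(r)}\right)^{1/i},\qquad \nu_r(P):=\max\{r,\,2c(r)\}. \] Then $P(x)>0$ for all $x>\nu_r(P)$. *)

theory Defs
  imports Complex_Main "HOL-Computational_Algebra.Polynomial"
begin

definition bnd_b :: "real poly \<Rightarrow> nat \<Rightarrow> real \<Rightarrow> real" where
  "bnd_b P m r = (\<Sum>j=m..degree P. coeff P j * r ^ (j - m))"

text \<open>c(r) = max_{1<=i<=m} (|a_(m-i)| / b(r))^(1/i); for m = 0 the (empty) maximum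
  is taken to be 0 (all terms are nonnegative, so inserting 0 does not change it for m >= 1).\<close>
definition bnd_c :: "real poly \<Rightarrow> nat \<Rightarrow> real \<Rightarrow> real" where
  "bnd_c P m r = Max (insert 0 ((\<lambda>i. root i (\<bar>coeff P (m - i)\<bar> / bnd_b P m r)) ` {1..m}))"

definition bnd_nu :: "real poly \<Rightarrow> nat \<Rightarrow> real \<Rightarrow> real" where
  "bnd_nu P m r = max r (2 * bnd_c P m r)"

end

theory Submission
  imports Defs
begin

text \<open>Split \<open>P(x)\<close> at degree \<open>m\<close>. Since \<open>x > r\<close> and \<open>a\<^sub>m, \<dots>, a\<^sub>n\<close> are
  nonnegative, the upper part is at least \<open>b(r) x^m\<close>. By definition of \<open>c = c(r)\<close> we have
  \<open>|a\<^sub>m\<^sub>-\<^sub>i| \<le> b(r) c^i\<close>, so the lower part is at most \<open>b(r) x^m \<Sum>\<^sub>i\<^sub>=\<^sub>1\<^sub>.\<^sub>.\<^sub>m (c/x)^i\<close>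
  in absolute value, which is strictly less than \<open>b(r) x^m\<close> because \<open>c/x < 1/2\<close>.\<close>

lemma sum_power_diff_mult_power_less:
  fixes c x :: real
  assumes "0 \<le> c" "2 * c < x"
  shows "(\<Sum>j<m. c ^ (m - j) * x ^ j) < x ^ m"
proof (induction m)
  case 0
  then show ?case by simp
next
  case (Suc m)
  have "(\<Sum>j<Suc m. c ^ (Suc m - j) * x ^ j) = c * ((\<Sum>j<m. c ^ (m - j) * x ^ j) + x ^ m)"
    by (simp add: sum_distrib_left Suc_diff_le algebra_simps)
  also have "\<dots> \<le> c * (2 * x ^ m)"
    using Suc assms by (intro mult_left_mono) auto
  also have "\<dots> < x * x ^ m"
    using assms by (simp add: mult.assoc[symmetric])
  finally show ?case by simp
qed

lemma abs_sum_power_less_of_coeff_bound: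
  fixes a :: "nat \<Rightarrow> real" and b c x :: real
  assumes coeff_bound: "\<And>j. j < m \<Longrightarrow> \<bar>a j\<bar> \<le> b * c ^ (m - j)"
    and "b > 0" "0 \<le> c" "2 * c < x"
  shows "\<bar>\<Sum>j<m. a j * x ^ j\<bar> < b * x ^ m"
proof -
  have "x > 0" using assms by linarith
  have "\<bar>\<Sum>j<m. a j * x ^ j\<bar> \<le> (\<Sum>j<m. \<bar>a j\<bar> * x ^ j)"
    using sum_abs[of "\<lambda>j. a j * x ^ j"] \<open>x > 0\<close> by (simp add: abs_mult)
  also have "\<dots> \<le> (\<Sum>j<m. b * (c ^ (m - j) * x ^ j))"
    using coeff_bound \<open>x > 0\<close>
    by (intro sum_mono) (simp add: mult.assoc[symmetric] mult_right_mono)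
  also have "\<dots> = b * (\<Sum>j<m. c ^ (m - j) * x ^ j)"
    by (simp add: sum_distrib_left)
  also have "\<dots> < b * x ^ m"
    using sum_power_diff_mult_power_less[OF assms(3,4)] \<open>b > 0\<close> by simp
  finally show ?thesis .
qed

lemma poly_split_at:
  fixes P :: "'a::comm_semiring_1 poly"
  assumes "m \<le> degree P"
  shows "poly P x = (\<Sum>j<m. coeff P j * x ^ j) + (\<Sum>j=m..degree P. coeff P j * x ^ j)"
proof -
  have "{..degree P} = {..<m} \<union> {m..degree P}" using assms by auto
  then show ?thesis
    unfolding poly_altdef by (simp add: sum.union_disjoint ivl_disj_int)
qed

lemma bnd_b_pos:
  assumes "P \<noteq> 0" "m \<le> degree P"
    and nonneg: "\<And>j. m \<le> j \<Longrightarrow> j \<le> degree P \<Longrightarrow> coeff P j \<ge> 0"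
    and "r > 0"
  shows "bnd_b P m r > 0"
proof -
  have "lead_coeff P > 0"
    using assms(1,2) nonneg[of "degree P"] by (simp add: order.order_iff_strict)
  then have "0 < lead_coeff P * r ^ (degree P - m)"
    using \<open>r > 0\<close> by simp
  also have "\<dots> \<le> bnd_b P m r"
    unfolding bnd_b_def using assms by (intro member_le_sum) auto
  finally show ?thesis .
qed

lemma bnd_c_nonneg: "bnd_c P m r \<ge> 0"
  unfolding bnd_c_def by (rule Max_ge) auto

lemma abs_coeff_le_bnd_b_mult_bnd_c_power:
  assumes "bnd_b P m r > 0" "j < m"
  shows "\<bar>coeff P j\<bar> \<le> bnd_b P m r * bnd_c P m r ^ (m - j)"
proof -
  define b where "b = bnd_b P m r"
  define y where "y = \<bar>coeff P j\<bar> / b"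
  have "root (m - j) y \<in> insert 0 ((\<lambda>i. root i (\<bar>coeff P (m - i)\<bar> / b)) ` {1..m})"
    using \<open>j < m\<close> unfolding y_def by (intro insertI2 image_eqI[of _ _ "m - j"]) auto
  then have "root (m - j) y \<le> bnd_c P m r"
    unfolding bnd_c_def b_def by (intro Max_ge) auto
  moreover have "root (m - j) y \<ge> 0"
    using assms unfolding y_def b_def by simp
  ultimately have "root (m - j) y ^ (m - j) \<le> bnd_c P m r ^ (m - j)"
    by (simp add: power_mono)
  moreover have "root (m - j) y ^ (m - j) = y"
    using assms unfolding y_def b_def by (intro real_root_pow_pos2) auto
  ultimately show ?thesis
    using assms unfolding y_def b_def by (simp add: field_simps)
qed

lemma bnd_b_mult_power_le_upper_part:
  assumes nonneg: "\<And>j. m \<le> j \<Longrightarrow> j \<le> degree P \<Longrightarrow> coeff P j \<ge> 0"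
    and "0 \<le> r" "r \<le> x"
  shows "bnd_b P m r * x ^ m \<le> (\<Sum>j=m..degree P. coeff P j * x ^ j)"
proof -
  have "bnd_b P m r * x ^ m = (\<Sum>j=m..degree P. coeff P j * (r ^ (j - m) * x ^ m))"
    unfolding bnd_b_def by (simp add: sum_distrib_right mult.assoc)
  also have "\<dots> \<le> (\<Sum>j=m..degree P. coeff P j * (x ^ (j - m) * x ^ m))"
    using assms by (intro sum_mono mult_left_mono mult_right_mono power_mono) auto
  also have "\<dots> = (\<Sum>j=m..degree P. coeff P j * x ^ j)"
    by (intro sum.cong) (auto simp: power_add[symmetric])
  finally show ?thesis .
qed

theorem proposition1:
  fixes P :: "real poly" and m :: nat and r :: real
  assumes "P \<noteq> 0"
    and "m \<le> degree P"
    and "\<And>j. m \<le> j \<Longrightarrow> j \<le> degree P \<Longrightarrow> coeff P j \<ge> 0"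
    and "r > 0"
  shows "\<forall>x. x > bnd_nu P m r \<longrightarrow> poly P x > 0"
proof (intro allI impI)
  fix x assume "x > bnd_nu P m r"
  then have "x > r" "x > 2 * bnd_c P m r"
    by (auto simp: bnd_nu_def)
  have b_pos: "bnd_b P m r > 0"
    using assms by (rule bnd_b_pos)
  have "\<bar>\<Sum>j<m. coeff P j * x ^ j\<bar> < bnd_b P m r * x ^ m"
    using abs_coeff_le_bnd_b_mult_bnd_c_power[OF b_pos] b_pos bnd_c_nonneg \<open>x > 2 * _\<close>
    by (rule abs_sum_power_less_of_coeff_bound)
  moreover have "bnd_b P m r * x ^ m \<le> (\<Sum>j=m..degree P. coeff P j * x ^ j)"
    using assms(3,4) \<open>x > r\<close> by (intro bnd_b_mult_power_le_upper_part) auto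
  ultimately show "poly P x > 0"
    using poly_split_at[OF assms(2), of x] by linarith
qed

end
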